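(* Let $f:\mathbb{R}\to\mathbb{R}$ be twice continuously differentiable, and let $u_L<u_U$ with $f''>0$ on $(u_L,u_U)$ or $f''<0$ on $(u_L,u_U)$. Let $a$ be the nonlinear average defined below. (Merging) Let $x_1<x_2\le x_3<x_4$, let $x_{23}$ satisfy $x_2\le x_{23}\le x_3$, and let $u_1,u_2,u_3,u_4\in[u_L,u_U]$. Then there is at most one $u_{23}\in[u_L,u_U]$ satisfying $$(x_{23}-x_1)\,a(u_1,u_{23})+(x_4-x_{23})\,a(u_{23},u_4)=(x_2-x_1)\,a(u_1,u_2)+(x_3-x_2)\,a(u_2,u_3)+(x_4-x_3)\,a(u_3,u_4).$$ (Insertion) Let $x_2<x_{23}<x_3$ and $u_2,u_3\in[u_L,u_U]$. Then there is at most one $u_{23}\in[u_L,u_U]$ satisfying $$(x_{23}-x_2)\,a(u_2,u_{23})+(x_3-x_{23})\,a(u_{23},u_3)=(x_3-x_2)\,a(u_2,u_3).$$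
   Context: For $g:\mathbb{R}\to\mathbb{R}$ write $[g(u)]_{a}^{b}=g(b)-g(a)$. For $u_1\neq u_2$ the nonlinear average is $a(u_1,u_2)=\frac{[f'(u)u-f(u)]_{u_1}^{u_2}}{[f'(u)]_{u_1}^{u_2}}=\frac{\int_{u_1}^{u_2}f''(u)u\,\mathrm{d}u}{\int_{u_1}^{u_2}f''(u)\,\mathrm{d}u}$, and $a(u,u)=u$. Here $(x_i,u_i)$ are particles (positions and solution values) in a particle method for $u_t+(f(u))_x=0$, and $(x_{23},u_{23})$ is the particle replacing particles 2 and 3 (merging) or inserted between them (insertion). *)

theory Defs
  imports "HOL-Analysis.Analysis"
begin

definition nl_avg :: "(real \<Rightarrow> real) \<Rightarrow> real \<Rightarrow> real \<Rightarrow> real" where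
  "nl_avg f u1 u2 =
     (if u1 = u2 then u1
      else ((deriv f u2 * u2 - f u2) - (deriv f u1 * u1 - f u1)) / (deriv f u2 - deriv f u1))"

end

theory Submission
  imports Defs
begin

text \<open>Write \<open>F u = f' u * u - f u\<close>, so that \<open>F'(u) = f''(u) u\<close>. Where \<open>f''\<close> has a fixed
  sign, Cauchy's mean value theorem puts \<open>a(p, q) = [F]/[f']\<close> strictly between \<open>p\<close> and \<open>q\<close>,
  and additivity of \<open>[F]\<close> and \<open>[f']\<close> over \<open>p < q < r\<close> makes \<open>a(p, r)\<close> a proper
  weighted mean of \<open>a(p, q)\<close> and \<open>a(q, r)\<close>. Together these show that \<open>a(u, \<cdot>)\<close> is
  strictly increasing on \<open>[u\<^sub>L, u\<^sub>U]\<close>. Hence both sides of the merging and insertion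
  equations, positive combinations of \<open>a(u\<^sub>1, \<cdot>)\<close> and \<open>a(\<cdot>, u\<^sub>4)\<close>, are strictly
  increasing in \<open>u\<^sub>2\<^sub>3\<close>, so the solution is unique.\<close>

lemma nl_avg_refl [simp]: "nl_avg f u u = u"
  by (simp add: nl_avg_def)

lemma nl_avg_commute: "nl_avg f u v = nl_avg f v u"
  unfolding nl_avg_def by (metis minus_diff_eq minus_divide_divide)

lemma nl_avg_uminus:
  assumes "\<And>x. (f has_real_derivative f' x) (at x)"
  shows "nl_avg (\<lambda>x. - f x) = nl_avg f"
proof (intro ext)
  fix u v
  have "deriv (\<lambda>x. - f x) = (\<lambda>x. - f' x)"
    using assms by (intro ext DERIV_imp_deriv derivative_intros)
  moreover have "deriv f = f'"
    using assms DERIV_imp_deriv by blast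
  ultimately show "nl_avg (\<lambda>x. - f x) u v = nl_avg f u v"
    unfolding nl_avg_def by (simp add: algebra_simps) (metis minus_diff_eq minus_divide_divide)
qed

lemma nl_avg_chain:
  assumes "deriv f = f'" and "f' p \<noteq> f' q" "f' q \<noteq> f' r" "f' p \<noteq> f' r"
  shows "(f' r - f' p) * nl_avg f p r = (f' q - f' p) * nl_avg f p q + (f' r - f' q) * nl_avg f q r"
proof -
  have bracket: "(f' y - f' x) * nl_avg f x y = (f' y * y - f y) - (f' x * x - f x)"
    if "f' x \<noteq> f' y" for x y
    using that \<open>deriv f = f'\<close> unfolding nl_avg_def by auto
  show ?thesis using bracket assms(2-4) by simp
qed

lemma deriv_strict_increasing:
  assumes d2: "\<And>x. (f' has_real_derivative f'' x) (at x)"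
    and pos: "\<And>x. p < x \<Longrightarrow> x < q \<Longrightarrow> f'' x > 0" and "p < q"
  shows "f' p < f' q"
proof (rule DERIV_pos_imp_increasing_open[OF \<open>p < q\<close>])
  show "continuous_on {p..q} f'"
    using d2 by (meson DERIV_continuous continuous_at_imp_continuous_on)
qed (use d2 pos in blast)

lemma nl_avg_between:
  assumes d1: "\<And>x. (f has_real_derivative f' x) (at x)"
    and d2: "\<And>x. (f' has_real_derivative f'' x) (at x)"
    and pos: "\<And>x. p < x \<Longrightarrow> x < q \<Longrightarrow> f'' x > 0" and "p < q"
  shows "p < nl_avg f p q \<and> nl_avg f p q < q"
proof -
  define F where "F x = f' x * x - f x" for x
  have dF: "(F has_real_derivative f'' x * x) (at x)" for x
    unfolding F_def using DERIV_diff[OF DERIV_mult[OF d2 DERIV_ident] d1] by simp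
  obtain c where c: "p < c" "c < q" and cauchy: "(F q - F p) * f'' c = (f' q - f' p) * (f'' c * c)"
    using GMVT'[OF \<open>p < q\<close>, of F f' f'' "\<lambda>x. f'' x * x"] DERIV_isCont[OF dF] DERIV_isCont[OF d2] d2 dF
    by blast
  have "f'' c > 0" using pos c by blast
  with cauchy have "F q - F p = (f' q - f' p) * c"
    by (metis mult.assoc mult.commute mult_right_cancel order_less_irrefl)
  moreover have "f' p < f' q" using deriv_strict_increasing[OF d2 pos \<open>p < q\<close>] .
  ultimately have "nl_avg f p q = c"
    using \<open>p < q\<close> DERIV_imp_deriv[OF d1] unfolding nl_avg_def F_def by (simp add: ext)
  with c show ?thesis by simp
qed

text \<open>\<open>a(p, r)\<close> is the mean of \<open>a(p, q) < q < a(q, r)\<close> with weights \<open>[f']\<^sub>p\<^sup>q, [f']\<^sub>q\<^sup>r > 0\<close>.\<close>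
lemma nl_avg_three_points:
  assumes d1: "\<And>x. (f has_real_derivative f' x) (at x)"
    and d2: "\<And>x. (f' has_real_derivative f'' x) (at x)"
    and pos: "\<And>x. p < x \<Longrightarrow> x < r \<Longrightarrow> f'' x > 0" and "p < q" "q < r"
  shows "nl_avg f p q < nl_avg f p r \<and> nl_avg f p r < nl_avg f q r"
proof -
  define A B where "A = f' q - f' p" and "B = f' r - f' q"
  have "A > 0" "B > 0"
    unfolding A_def B_def using deriv_strict_increasing[OF d2] pos \<open>p < q\<close> \<open>q < r\<close> by force+
  have "nl_avg f p q < q" "q < nl_avg f q r"
    using nl_avg_between[OF d1 d2] pos \<open>p < q\<close> \<open>q < r\<close> by force+
  then have "A * nl_avg f p q + B * nl_avg f p q < A * nl_avg f p q + B * nl_avg f q r"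
    and "A * nl_avg f p q + B * nl_avg f q r < A * nl_avg f q r + B * nl_avg f q r"
    using \<open>A > 0\<close> \<open>B > 0\<close> by simp_all
  moreover have "(A + B) * nl_avg f p r = A * nl_avg f p q + B * nl_avg f q r"
    using nl_avg_chain[of f f' p q r] DERIV_imp_deriv[OF d1] \<open>A > 0\<close> \<open>B > 0\<close>
    unfolding A_def B_def by (simp add: ext)
  ultimately have "(A + B) * nl_avg f p q < (A + B) * nl_avg f p r"
    and "(A + B) * nl_avg f p r < (A + B) * nl_avg f q r"
    by (simp_all only: distrib_right)
  with \<open>A > 0\<close> \<open>B > 0\<close> show ?thesis
    using mult_less_cancel_left_pos[of "A + B"] by simp
qed

lemma nl_avg_strict_mono_on_convex:
  assumes d1: "\<And>x. (f has_real_derivative f' x) (at x)"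
    and d2: "\<And>x. (f' has_real_derivative f'' x) (at x)"
    and pos: "\<forall>x\<in>{uL<..<uU}. f'' x > 0" and u: "u \<in> {uL..uU}"
  shows "strict_mono_on {uL..uU} (nl_avg f u)"
proof (rule strict_mono_onI)
  fix v w assume v: "v \<in> {uL..uU}" and w: "w \<in> {uL..uU}" and "v < w"
  have between: "p < nl_avg f p q \<and> nl_avg f p q < q"
    if "p \<in> {uL..uU}" "q \<in> {uL..uU}" "p < q" for p q
    using nl_avg_between[OF d1 d2, of p q] pos that by auto
  have three: "nl_avg f p q < nl_avg f p r \<and> nl_avg f p r < nl_avg f q r"
    if "p \<in> {uL..uU}" "r \<in> {uL..uU}" "p < q" "q < r" for p q r
    using nl_avg_three_points[OF d1 d2, of p r q] pos that by auto
  have swap: "nl_avg f u v = nl_avg f v u" "nl_avg f u w = nl_avg f w u"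
    by (rule nl_avg_commute)+
  consider "w < u" | "w = u" | "v < u" "u < w" | "v = u" | "u < v"
    using \<open>v < w\<close> by linarith
  then show "nl_avg f u v < nl_avg f u w"
  proof cases
    case 1 then show ?thesis using three[of v u w] v u \<open>v < w\<close> by (simp add: swap)
  next
    case 2 then show ?thesis using between[of v u] v u \<open>v < w\<close> by (simp add: swap)
  next
    case 3 then show ?thesis using between[of v u] between[of u w] v w u by (simp add: swap)
  next
    case 4 then show ?thesis using between[of u w] w u \<open>v < w\<close> by simp
  next
    case 5 then show ?thesis using three[of u w v] w u \<open>v < w\<close> by simp
  qed
qed

lemma nl_avg_strict_mono_on:
  assumes d1: "\<And>x. (f has_real_derivative f' x) (at x)"
    and d2: "\<And>x. (f' has_real_derivative f'' x) (at x)"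
    and convex_or_concave: "(\<forall>x\<in>{uL<..<uU}. f'' x > 0) \<or> (\<forall>x\<in>{uL<..<uU}. f'' x < 0)"
    and u: "u \<in> {uL..uU}"
  shows "strict_mono_on {uL..uU} (nl_avg f u)"
  using convex_or_concave
proof
  assume "\<forall>x\<in>{uL<..<uU}. f'' x > 0"
  then show ?thesis using nl_avg_strict_mono_on_convex[OF d1 d2 _ u] by blast
next
  assume "\<forall>x\<in>{uL<..<uU}. f'' x < 0"
  then have "\<forall>x\<in>{uL<..<uU}. - f'' x > 0" by simp
  moreover have "((\<lambda>x. - f x) has_real_derivative - f' x) (at x)"
    and "((\<lambda>x. - f' x) has_real_derivative - f'' x) (at x)" for x
    using d1 d2 by (auto intro: derivative_intros)
  ultimately show ?thesis
    using nl_avg_strict_mono_on_convex[of "\<lambda>x. - f x" "\<lambda>x. - f' x" "\<lambda>x. - f'' x" uL uU u] u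
    by (simp add: nl_avg_uminus[OF d1])
qed

lemma weighted_nl_avg_inj_on:
  assumes d1: "\<And>x. (f has_real_derivative f' x) (at x)"
    and d2: "\<And>x. (f' has_real_derivative f'' x) (at x)"
    and convex_or_concave: "(\<forall>x\<in>{uL<..<uU}. f'' x > 0) \<or> (\<forall>x\<in>{uL<..<uU}. f'' x < 0)"
    and "P > 0" "Q > 0" and a: "a \<in> {uL..uU}" and b: "b \<in> {uL..uU}"
  shows "inj_on (\<lambda>v. P * nl_avg f a v + Q * nl_avg f v b) {uL..uU}"
proof (rule strict_mono_on_imp_inj_on, rule strict_mono_onI)
  fix v w assume "v \<in> {uL..uU}" "w \<in> {uL..uU}" "v < w"
  then have "nl_avg f a v < nl_avg f a w" "nl_avg f b v < nl_avg f b w"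
    using nl_avg_strict_mono_on[OF d1 d2 convex_or_concave] a b strict_mono_onD by blast+
  with \<open>P > 0\<close> \<open>Q > 0\<close> show "P * nl_avg f a v + Q * nl_avg f v b < P * nl_avg f a w + Q * nl_avg f w b"
    by (simp add: nl_avg_commute[of f _ b] add_strict_mono)
qed

theorem lemma2:
  fixes f f' f'' :: "real \<Rightarrow> real" and uL uU :: real
  assumes d1: "\<And>x. (f has_real_derivative f' x) (at x)"
    and d2: "\<And>x. (f' has_real_derivative f'' x) (at x)"
    and c2: "continuous_on UNIV f''"
    and lt: "uL < uU"
    and convex_or_concave: "(\<forall>u\<in>{uL<..<uU}. f'' u > 0) \<or> (\<forall>u\<in>{uL<..<uU}. f'' u < 0)"
  shows "(\<forall>x1 x2 x3 x4 x23 u1 u2 u3 u4.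
            x1 < x2 \<and> x2 \<le> x3 \<and> x3 < x4 \<and> x2 \<le> x23 \<and> x23 \<le> x3 \<and>
            u1 \<in> {uL..uU} \<and> u2 \<in> {uL..uU} \<and> u3 \<in> {uL..uU} \<and> u4 \<in> {uL..uU} \<longrightarrow>
            (\<forall>v\<in>{uL..uU}. \<forall>w\<in>{uL..uU}.
               (x23 - x1) * nl_avg f u1 v + (x4 - x23) * nl_avg f v u4 =
                 (x2 - x1) * nl_avg f u1 u2 + (x3 - x2) * nl_avg f u2 u3 + (x4 - x3) * nl_avg f u3 u4 \<and>
               (x23 - x1) * nl_avg f u1 w + (x4 - x23) * nl_avg f w u4 =
                 (x2 - x1) * nl_avg f u1 u2 + (x3 - x2) * nl_avg f u2 u3 + (x4 - x3) * nl_avg f u3 u4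
               \<longrightarrow> v = w))
       \<and>
         (\<forall>x2 x3 x23 u2 u3.
            x2 < x23 \<and> x23 < x3 \<and> u2 \<in> {uL..uU} \<and> u3 \<in> {uL..uU} \<longrightarrow>
            (\<forall>v\<in>{uL..uU}. \<forall>w\<in>{uL..uU}.
               (x23 - x2) * nl_avg f u2 v + (x3 - x23) * nl_avg f v u3 = (x3 - x2) * nl_avg f u2 u3 \<and>
               (x23 - x2) * nl_avg f u2 w + (x3 - x23) * nl_avg f w u3 = (x3 - x2) * nl_avg f u2 u3
               \<longrightarrow> v = w))"
proof (intro conjI allI impI ballI)
  fix x1 x2 x3 x4 x23 u1 u2 u3 u4 v w
  assume hyps: "x1 < x2 \<and> x2 \<le> x3 \<and> x3 < x4 \<and> x2 \<le> x23 \<and> x23 \<le> x3 \<and>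
            u1 \<in> {uL..uU} \<and> u2 \<in> {uL..uU} \<and> u3 \<in> {uL..uU} \<and> u4 \<in> {uL..uU}"
    and v: "v \<in> {uL..uU}" and w: "w \<in> {uL..uU}"
    and eq: "(x23 - x1) * nl_avg f u1 v + (x4 - x23) * nl_avg f v u4 =
           (x2 - x1) * nl_avg f u1 u2 + (x3 - x2) * nl_avg f u2 u3 + (x4 - x3) * nl_avg f u3 u4 \<and>
         (x23 - x1) * nl_avg f u1 w + (x4 - x23) * nl_avg f w u4 =
           (x2 - x1) * nl_avg f u1 u2 + (x3 - x2) * nl_avg f u2 u3 + (x4 - x3) * nl_avg f u3 u4"
  from hyps have "inj_on (\<lambda>v. (x23 - x1) * nl_avg f u1 v + (x4 - x23) * nl_avg f v u4) {uL..uU}"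
    by (intro weighted_nl_avg_inj_on[OF d1 d2 convex_or_concave]) auto
  from inj_onD[OF this _ v w] show "v = w" using eq by simp
next
  fix x2 x3 x23 u2 u3 v w
  assume hyps: "x2 < x23 \<and> x23 < x3 \<and> u2 \<in> {uL..uU} \<and> u3 \<in> {uL..uU}"
    and v: "v \<in> {uL..uU}" and w: "w \<in> {uL..uU}"
    and eq: "(x23 - x2) * nl_avg f u2 v + (x3 - x23) * nl_avg f v u3 = (x3 - x2) * nl_avg f u2 u3 \<and>
         (x23 - x2) * nl_avg f u2 w + (x3 - x23) * nl_avg f w u3 = (x3 - x2) * nl_avg f u2 u3"
  from hyps have "inj_on (\<lambda>v. (x23 - x2) * nl_avg f u2 v + (x3 - x23) * nl_avg f v u3) {uL..uU}"
    by (intro weighted_nl_avg_inj_on[OF d1 d2 convex_or_concave]) auto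
  from inj_onD[OF this _ v w] show "v = w" using eq by simp
qed

end
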